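(* Let $G_1,G_2$ be multiplicative Lie algebras and $\mu:G_1\to G_2$ a multiplicative Lie algebra homomorphism such that $\ker\mu\cap{}^M[G_1,G_1]=1$ and $\mu(G_1)\,\mathcal Z(G_2)=G_2$. Then the map $\nu:G_1/\mathcal Z(G_1)\to G_2/\mathcal Z(G_2)$, $\nu(g\mathcal Z(G_1))=\mu(g)\mathcal Z(G_2)$, together with $\mu|_{{}^M[G_1,G_1]}$, forms an isoclinism $(\nu,\mu|_{{}^M[G_1,G_1]})$ between $G_1$ and $G_2$.
   Context: A multiplicative Lie algebra is a group $(G,\cdot)$ with a binary operation $\star$ such that for all $x,y,z\in G$: $x\star x=1$; $x\star(yz)=(x\star y)\,{}^y(x\star z)$; $(xy)\star z={}^x(y\star z)(x\star z)$; $((x\star y)\star{}^yz)((y\star z)\star{}^zx)((z\star x)\star{}^xy)=1$; ${}^z(x\star y)={}^zx\star{}^zy$, where ${}^xy=xyx^{-1}$. Homomorphisms preserve both operations. $Z(G)$ is the group center, $LZ(G)=\{x: x\star y=1\ \forall y\}$, $\mathcal Z(G)=LZ(G)\cap Z(G)$; $[x,y]$ is the group commutator; ${}^M[G,G]=(G\star G)[G,G]$ with $G\star G$ the ideal generated by all $a\star b$. $G_1,G_2$ are isoclinic via $(\nu,\mu')$ if $\nu:G_1/\mathcal Z(G_1)\to G_2/\mathcal Z(G_2)$ and $\mu':{}^M[G_1,G_1]\to{}^M[G_2,G_2]$ are multiplicative Lie algebra isomorphisms with $\mu'([g,g'])=[h,h']$ and $\mu'(g\star g')=h\star h'$ whenever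 $\nu(g\mathcal Z(G_1))=h\mathcal Z(G_2)$ and $\nu(g'\mathcal Z(G_1))=h'\mathcal Z(G_2)$. *)

theory Defs
  imports "HOL-Algebra.Algebra"
begin

record 'a mla = "'a monoid" + star :: "'a \<Rightarrow> 'a \<Rightarrow> 'a"

definition conjg :: "('a, 'b) monoid_scheme \<Rightarrow> 'a \<Rightarrow> 'a \<Rightarrow> 'a" where
  "conjg G x y = x \<otimes>\<^bsub>G\<^esub> y \<otimes>\<^bsub>G\<^esub> inv\<^bsub>G\<^esub> x"

definition gcomm :: "('a, 'b) monoid_scheme \<Rightarrow> 'a \<Rightarrow> 'a \<Rightarrow> 'a" where
  "gcomm G x y = x \<otimes>\<^bsub>G\<^esub> y \<otimes>\<^bsub>G\<^esub> inv\<^bsub>G\<^esub> x \<otimes>\<^bsub>G\<^esub> inv\<^bsub>G\<^esub> y"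

definition mult_lie_algebra :: "'a mla \<Rightarrow> bool" where
  "mult_lie_algebra G \<longleftrightarrow> group G \<and>
    (\<forall>x\<in>carrier G. \<forall>y\<in>carrier G. star G x y \<in> carrier G) \<and>
    (\<forall>x\<in>carrier G. star G x x = \<one>\<^bsub>G\<^esub>) \<and>
    (\<forall>x\<in>carrier G. \<forall>y\<in>carrier G. \<forall>z\<in>carrier G.
       star G x (y \<otimes>\<^bsub>G\<^esub> z) = star G x y \<otimes>\<^bsub>G\<^esub> conjg G y (star G x z)) \<and>
    (\<forall>x\<in>carrier G. \<forall>y\<in>carrier G. \<forall>z\<in>carrier G.
       star G (x \<otimes>\<^bsub>G\<^esub> y) z = conjg G x (star G y z) \<otimes>\<^bsub>G\<^esub> star G x z) \<and>
    (\<forall>x\<in>carrier G. \<forall>y\<in>carrier G. \<forall>z\<in>carrier G.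
       star G (star G x y) (conjg G y z) \<otimes>\<^bsub>G\<^esub> star G (star G y z) (conjg G z x)
         \<otimes>\<^bsub>G\<^esub> star G (star G z x) (conjg G x y) = \<one>\<^bsub>G\<^esub>) \<and>
    (\<forall>x\<in>carrier G. \<forall>y\<in>carrier G. \<forall>z\<in>carrier G.
       conjg G z (star G x y) = star G (conjg G z x) (conjg G z y))"

definition group_center :: "('a, 'b) monoid_scheme \<Rightarrow> 'a set" where
  "group_center G = {x \<in> carrier G. \<forall>y\<in>carrier G. x \<otimes>\<^bsub>G\<^esub> y = y \<otimes>\<^bsub>G\<^esub> x}"

definition LZ :: "'a mla \<Rightarrow> 'a set" where
  "LZ G = {x \<in> carrier G. \<forall>y\<in>carrier G. star G x y = \<one>\<^bsub>G\<^esub>}"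

definition mla_center :: "'a mla \<Rightarrow> 'a set" where
  "mla_center G = LZ G \<inter> group_center G"

definition mla_ideal :: "'a mla \<Rightarrow> 'a set \<Rightarrow> bool" where
  "mla_ideal G I \<longleftrightarrow> I \<lhd> G \<and>
     (\<forall>x\<in>carrier G. \<forall>i\<in>I. star G x i \<in> I \<and> star G i x \<in> I)"

definition ideal_generated :: "'a mla \<Rightarrow> 'a set \<Rightarrow> 'a set" where
  "ideal_generated G S = \<Inter>{I. mla_ideal G I \<and> S \<subseteq> I}"

definition star_ideal :: "'a mla \<Rightarrow> 'a set" where
  "star_ideal G = ideal_generated G {star G a b | a b. a \<in> carrier G \<and> b \<in> carrier G}"

definition Mcomm :: "'a mla \<Rightarrow> 'a set" where
  "Mcomm G = star_ideal G <#>\<^bsub>G\<^esub> derived G (carrier G)"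

definition sub_mla :: "'a mla \<Rightarrow> 'a set \<Rightarrow> 'a mla" where
  "sub_mla G S = \<lparr>carrier = S, monoid.mult = monoid.mult G, one = one G, star = star G\<rparr>"

text \<open>Quotient by an ideal N: cosets, with (aN) \<star> (bN) = (a \<star> b)N.\<close>
definition quot_mla :: "'a mla \<Rightarrow> 'a set \<Rightarrow> 'a set mla" where
  "quot_mla G N = \<lparr>carrier = rcosets\<^bsub>G\<^esub> N, monoid.mult = set_mult G, one = N,
     star = (\<lambda>A B. \<Union>a\<in>A. \<Union>b\<in>B. N #>\<^bsub>G\<^esub> star G a b)\<rparr>"

definition mla_hom :: "'a mla \<Rightarrow> 'b mla \<Rightarrow> ('a \<Rightarrow> 'b) set" where
  "mla_hom G H = {h. h \<in> hom G H \<and>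
     (\<forall>x\<in>carrier G. \<forall>y\<in>carrier G. h (star G x y) = star H (h x) (h y))}"

definition mla_iso :: "'a mla \<Rightarrow> 'b mla \<Rightarrow> ('a \<Rightarrow> 'b) set" where
  "mla_iso G H = {h \<in> mla_hom G H. bij_betw h (carrier G) (carrier H)}"

definition isoclinism :: "'a mla \<Rightarrow> 'b mla \<Rightarrow> ('a set \<Rightarrow> 'b set) \<Rightarrow> ('a \<Rightarrow> 'b) \<Rightarrow> bool" where
  "isoclinism G1 G2 \<nu> \<mu>' \<longleftrightarrow>
     \<nu> \<in> mla_iso (quot_mla G1 (mla_center G1)) (quot_mla G2 (mla_center G2)) \<and>
     \<mu>' \<in> mla_iso (sub_mla G1 (Mcomm G1)) (sub_mla G2 (Mcomm G2)) \<and>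
     (\<forall>g\<in>carrier G1. \<forall>g'\<in>carrier G1. \<forall>h\<in>carrier G2. \<forall>h'\<in>carrier G2.
        \<nu> (mla_center G1 #>\<^bsub>G1\<^esub> g) = mla_center G2 #>\<^bsub>G2\<^esub> h \<and>
        \<nu> (mla_center G1 #>\<^bsub>G1\<^esub> g') = mla_center G2 #>\<^bsub>G2\<^esub> h' \<longrightarrow>
        \<mu>' (gcomm G1 g g') = gcomm G2 h h' \<and> \<mu>' (star G1 g g') = star G2 h h')"

end

theory Submission imports Defs begin

text \<open>Stars and commutators ignore central factors. Hence, when \<open>\<mu>(G\<^sub>1) Z(G\<^sub>2) = G\<^sub>2\<close>,
every star and every commutator of \<open>G\<^sub>2\<close> is the image of one of \<open>G\<^sub>1\<close>, so \<open>\<mu>\<close> maps the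
star ideal and the derived subgroup of \<open>G\<^sub>1\<close>, and with them \<open>\<^sup>M[G\<^sub>1,G\<^sub>1]\<close>, onto their
counterparts in \<open>G\<^sub>2\<close>; by the kernel hypothesis it is injective there. The same hypothesis
shows that \<open>x\<close> is central as soon as \<open>\<mu> x\<close> is, because \<open>[x,y]\<close> and \<open>x \<star> y\<close> lie in
\<open>\<^sup>M[G\<^sub>1,G\<^sub>1]\<close> and are killed by \<open>\<mu>\<close>. Thus \<open>g Z(G\<^sub>1) \<mapsto> \<mu>(g) Z(G\<^sub>2)\<close> is a bijection of
the central quotients, and it is compatible with commutators and stars because these only
depend on cosets of the centre.\<close>

abbreviation star_set :: "'a mla \<Rightarrow> 'a set" where
  "star_set G \<equiv> {star G a b | a b. a \<in> carrier G \<and> b \<in> carrier G}"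

lemma quot_mla_carrier_iff: "A \<in> carrier (quot_mla G N) \<longleftrightarrow> (\<exists>g \<in> carrier G. A = N #>\<^bsub>G\<^esub> g)"
  by (auto simp: quot_mla_def RCOSETS_def)

lemma ideal_generated_least: "mla_ideal G I \<Longrightarrow> S \<subseteq> I \<Longrightarrow> ideal_generated G S \<subseteq> I"
  unfolding ideal_generated_def by blast

lemma ideal_generated_incl: "S \<subseteq> ideal_generated G S"
  unfolding ideal_generated_def by blast

locale mult_lie_alg =
  fixes G :: "'a mla" (structure)
  assumes mult_lie_algebra: "mult_lie_algebra G"
begin

sublocale group G
  using mult_lie_algebra unfolding mult_lie_algebra_def by blast

lemma star_closed [simp]: "x \<in> carrier G \<Longrightarrow> y \<in> carrier G \<Longrightarrow> star G x y \<in> carrier G"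
  using mult_lie_algebra unfolding mult_lie_algebra_def by blast

lemma star_self [simp]: "x \<in> carrier G \<Longrightarrow> star G x x = \<one>"
  using mult_lie_algebra unfolding mult_lie_algebra_def by blast

lemma star_mult_right:
  "\<lbrakk>x \<in> carrier G; y \<in> carrier G; z \<in> carrier G\<rbrakk> \<Longrightarrow>
   star G x (y \<otimes> z) = star G x y \<otimes> conjg G y (star G x z)"
  using mult_lie_algebra unfolding mult_lie_algebra_def by blast

lemma star_mult_left:
  "\<lbrakk>x \<in> carrier G; y \<in> carrier G; z \<in> carrier G\<rbrakk> \<Longrightarrow>
   star G (x \<otimes> y) z = conjg G x (star G y z) \<otimes> star G x z"
  using mult_lie_algebra unfolding mult_lie_algebra_def by blast

lemma conjg_closed [simp]: "x \<in> carrier G \<Longrightarrow> y \<in> carrier G \<Longrightarrow> conjg G x y \<in> carrier G"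
  unfolding conjg_def by simp

lemma conjg_one [simp]: "x \<in> carrier G \<Longrightarrow> conjg G x \<one> = \<one>"
  unfolding conjg_def by simp

lemma conjg_mult:
  "\<lbrakk>x \<in> carrier G; a \<in> carrier G; b \<in> carrier G\<rbrakk> \<Longrightarrow>
   conjg G x (a \<otimes> b) = conjg G x a \<otimes> conjg G x b"
  unfolding conjg_def by (simp add: m_assoc inv_solve_left)

lemma conjg_eq_one_iff [simp]:
  "x \<in> carrier G \<Longrightarrow> a \<in> carrier G \<Longrightarrow> conjg G x a = \<one> \<longleftrightarrow> a = \<one>"
  unfolding conjg_def by (metis inv_solve_right l_inv l_one m_assoc m_closed inv_closed)

lemma gcomm_closed [simp]: "x \<in> carrier G \<Longrightarrow> y \<in> carrier G \<Longrightarrow> gcomm G x y \<in> carrier G"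
  unfolding gcomm_def by simp

lemma commute_if_gcomm_eq_one:
  assumes "x \<in> carrier G" "y \<in> carrier G" "gcomm G x y = \<one>"
  shows "x \<otimes> y = y \<otimes> x"
  using assms unfolding gcomm_def by (simp add: inv_solve_right')

lemma star_swap:
  assumes x: "x \<in> carrier G" and y: "y \<in> carrier G"
  shows "star G x y = inv (star G y x)"
proof -
  have "\<one> = star G (x \<otimes> y) (x \<otimes> y)" using x y by simp
  also have "\<dots> = conjg G x (star G y (x \<otimes> y)) \<otimes> star G x (x \<otimes> y)"
    using x y by (simp add: star_mult_left del: star_self)
  also have "\<dots> = conjg G x (star G y x \<otimes> star G x y)"
    using x y by (simp add: star_mult_right conjg_mult)
  finally have "conjg G x (star G y x \<otimes> star G x y) = \<one>" by (rule sym)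
  then have "star G y x \<otimes> star G x y = \<one>" using x y by simp
  then show ?thesis using x y by (metis inv_comm inv_equality star_closed)
qed

lemma star_one_left [simp]: "y \<in> carrier G \<Longrightarrow> star G \<one> y = \<one>"
  using star_mult_left[of \<one> \<one> y] by (simp add: conjg_def)

lemma conjg_conjg:
  "\<lbrakk>x \<in> carrier G; y \<in> carrier G; a \<in> carrier G\<rbrakk> \<Longrightarrow>
   conjg G (x \<otimes> y) a = conjg G x (conjg G y a)"
  unfolding conjg_def by (simp add: m_assoc inv_mult_group)

lemma gcomm_eq_conjg: "gcomm G x y = conjg G x y \<otimes> inv y"
  unfolding gcomm_def conjg_def ..

lemma gcomm_swap: "x \<in> carrier G \<Longrightarrow> y \<in> carrier G \<Longrightarrow> gcomm G x y = inv (gcomm G y x)"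
  unfolding gcomm_def by (simp add: inv_mult_group m_assoc)

lemma center_closed: "mla_center G \<subseteq> carrier G"
  unfolding mla_center_def LZ_def by auto

lemma center_mem_carrier [simp]: "z \<in> mla_center G \<Longrightarrow> z \<in> carrier G"
  using center_closed by blast

lemma center_commute: "z \<in> mla_center G \<Longrightarrow> y \<in> carrier G \<Longrightarrow> z \<otimes> y = y \<otimes> z"
  unfolding mla_center_def group_center_def by auto

lemma star_center_left [simp]: "z \<in> mla_center G \<Longrightarrow> y \<in> carrier G \<Longrightarrow> star G z y = \<one>"
  unfolding mla_center_def LZ_def by auto

lemma star_center_right [simp]: "z \<in> mla_center G \<Longrightarrow> y \<in> carrier G \<Longrightarrow> star G y z = \<one>"
  by (simp add: star_swap[of y z])

lemma centerI:
  "\<lbrakk>z \<in> carrier G; \<And>y. y \<in> carrier G \<Longrightarrow> z \<otimes> y = y \<otimes> z;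
    \<And>y. y \<in> carrier G \<Longrightarrow> star G z y = \<one>\<rbrakk> \<Longrightarrow> z \<in> mla_center G"
  unfolding mla_center_def LZ_def group_center_def by auto

lemma conjg_center [simp]: "z \<in> mla_center G \<Longrightarrow> a \<in> carrier G \<Longrightarrow> conjg G z a = a"
  using center_commute[of z a] unfolding conjg_def by (simp add: m_assoc)

lemma gcomm_center_left [simp]: "z \<in> mla_center G \<Longrightarrow> y \<in> carrier G \<Longrightarrow> gcomm G z y = \<one>"
  by (simp add: gcomm_eq_conjg)

lemma center_subgroup: "subgroup (mla_center G) G"
proof (rule subgroupI)
  fix z w assume z: "z \<in> mla_center G" and w: "w \<in> mla_center G"
  then have zw: "z \<in> carrier G" "w \<in> carrier G" by simp_all
  show "inv z \<in> mla_center G"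
  proof (rule centerI)
    fix y assume y: "y \<in> carrier G"
    have "conjg G z (inv z \<otimes> y) = inv z \<otimes> y" using z zw y by simp
    then show "inv z \<otimes> y = y \<otimes> inv z"
      using zw y unfolding conjg_def by (simp add: m_assoc[symmetric])
    show "star G (inv z) y = \<one>"
      using star_mult_left[of z "inv z" y] z zw y by simp
  qed (use zw in simp)
  show "z \<otimes> w \<in> mla_center G"
  proof (rule centerI)
    fix y assume y: "y \<in> carrier G"
    have "z \<otimes> w \<otimes> y = z \<otimes> (y \<otimes> w)"
      using zw y by (simp add: m_assoc center_commute[OF w y])
    also have "\<dots> = y \<otimes> (z \<otimes> w)"
      using zw y by (simp add: m_assoc[symmetric] center_commute[OF z y])
    finally show "z \<otimes> w \<otimes> y = y \<otimes> (z \<otimes> w)" .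
    show "star G (z \<otimes> w) y = \<one>" using z w zw y by (simp add: star_mult_left)
  qed (use zw in simp)
next
  have "\<one> \<in> mla_center G" by (rule centerI) auto
  then show "mla_center G \<noteq> {}" by blast
qed (use center_closed in auto)

lemma center_normal: "mla_center G \<lhd> G"
  unfolding normal_inv_iff
proof (intro conjI center_subgroup ballI)
  fix x h assume "x \<in> carrier G" "h \<in> mla_center G"
  then show "x \<otimes> h \<otimes> inv x \<in> mla_center G"
    using center_commute[of h x, symmetric] by (simp add: m_assoc)
qed

lemma star_mult_center_left [simp]:
  "\<lbrakk>x \<in> carrier G; z \<in> mla_center G; y \<in> carrier G\<rbrakk> \<Longrightarrow> star G (x \<otimes> z) y = star G x y"
  using center_commute[of z x] by (simp add: star_mult_left)

lemma star_mult_center_right [simp]: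
  "\<lbrakk>x \<in> carrier G; y \<in> carrier G; z \<in> mla_center G\<rbrakk> \<Longrightarrow> star G x (y \<otimes> z) = star G x y"
  by (simp add: star_mult_right)

lemma conjg_mult_center [simp]:
  "\<lbrakk>x \<in> carrier G; z \<in> mla_center G; a \<in> carrier G\<rbrakk> \<Longrightarrow> conjg G (x \<otimes> z) a = conjg G x a"
  by (simp add: conjg_conjg)

lemma gcomm_mult_center_left:
  "\<lbrakk>x \<in> carrier G; z \<in> mla_center G; y \<in> carrier G\<rbrakk> \<Longrightarrow> gcomm G (x \<otimes> z) y = gcomm G x y"
  by (simp add: gcomm_eq_conjg)

lemma gcomm_mult_center [simp]:
  assumes "x \<in> carrier G" "z \<in> mla_center G" "y \<in> carrier G" "w \<in> mla_center G"
  shows "gcomm G (x \<otimes> z) (y \<otimes> w) = gcomm G x y"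
proof -
  have "y \<otimes> w \<in> carrier G" using assms by simp
  then have "gcomm G (x \<otimes> z) (y \<otimes> w) = inv (gcomm G (y \<otimes> w) x)"
    using assms by (simp add: gcomm_mult_center_left gcomm_swap[of x])
  also have "\<dots> = gcomm G x y"
    using assms by (simp add: gcomm_mult_center_left gcomm_swap[of x y])
  finally show ?thesis .
qed

lemma center_rcos_iff:
  assumes "a \<in> carrier G"
  shows "h \<in> mla_center G #> a \<longleftrightarrow> (\<exists>z \<in> mla_center G. h = a \<otimes> z)"
proof -
  have "z \<otimes> a = a \<otimes> z" if "z \<in> mla_center G" for z
    using that assms by (rule center_commute)
  then show ?thesis unfolding r_coset_def by auto
qed

lemma quot_mla_mult:
  "\<lbrakk>N \<lhd> G; g \<in> carrier G; g' \<in> carrier G\<rbrakk> \<Longrightarrow>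
   (N #> g) \<otimes>\<^bsub>quot_mla G N\<^esub> (N #> g') = N #> (g \<otimes> g')"
  by (simp add: quot_mla_def normal.rcos_sum)

lemma quot_center_star:
  assumes g: "g \<in> carrier G" and g': "g' \<in> carrier G"
  shows "star (quot_mla G (mla_center G)) (mla_center G #> g) (mla_center G #> g')
           = mla_center G #> star G g g'"
proof -
  let ?Z = "mla_center G"
  have star_eq: "?Z #> star G a b = ?Z #> star G g g'" if a: "a \<in> ?Z #> g" and b: "b \<in> ?Z #> g'" for a b
  proof -
    obtain z w where "z \<in> ?Z" "a = g \<otimes> z" "w \<in> ?Z" "b = g' \<otimes> w"
      using a b g g' center_rcos_iff by meson
    then show ?thesis using g g' by simp
  qed
  have "?Z #> g \<noteq> {}" "?Z #> g' \<noteq> {}"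
    using g g' center_subgroup rcos_self by blast+
  then show ?thesis
    unfolding quot_mla_def by (simp add: star_eq cong: SUP_cong)
qed

lemma mla_idealI:
  assumes "subgroup I G"
    and "\<And>x s. x \<in> carrier G \<Longrightarrow> s \<in> I \<Longrightarrow> conjg G x s \<in> I"
    and "\<And>x s. x \<in> carrier G \<Longrightarrow> s \<in> I \<Longrightarrow> star G x s \<in> I"
    and "\<And>x s. x \<in> carrier G \<Longrightarrow> s \<in> I \<Longrightarrow> star G s x \<in> I"
  shows "mla_ideal G I"
  using assms unfolding mla_ideal_def normal_inv_iff conjg_def by blast

lemma mla_ideal_subgroup: "mla_ideal G I \<Longrightarrow> subgroup I G"
  unfolding mla_ideal_def by (blast intro: normal_imp_subgroup)

lemma mla_ideal_conjg_closed: "\<lbrakk>mla_ideal G I; x \<in> carrier G; s \<in> I\<rbrakk> \<Longrightarrow> conjg G x s \<in> I"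
  unfolding mla_ideal_def conjg_def by (blast dest: normal.inv_op_closed2)

lemma mla_ideal_star_right_closed: "\<lbrakk>mla_ideal G I; x \<in> carrier G; s \<in> I\<rbrakk> \<Longrightarrow> star G x s \<in> I"
  unfolding mla_ideal_def by blast

lemma mla_ideal_star_left_closed: "\<lbrakk>mla_ideal G I; x \<in> carrier G; s \<in> I\<rbrakk> \<Longrightarrow> star G s x \<in> I"
  unfolding mla_ideal_def by blast

lemma mla_ideal_carrier: "mla_ideal G (carrier G)"
  unfolding mla_ideal_def by (simp add: normal_inv_iff subgroup_self)

lemma mla_ideal_Inter:
  assumes "\<A> \<noteq> {}" "\<And>I. I \<in> \<A> \<Longrightarrow> mla_ideal G I"
  shows "mla_ideal G (\<Inter>\<A>)"
proof -
  have "subgroup (\<Inter>\<A>) G"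
    using assms subgroups_Inter unfolding mla_ideal_def normal_inv_iff by blast
  then show ?thesis
    using assms unfolding mla_ideal_def normal_inv_iff by blast
qed

lemma ideal_generated_ideal: "S \<subseteq> carrier G \<Longrightarrow> mla_ideal G (ideal_generated G S)"
  unfolding ideal_generated_def by (rule mla_ideal_Inter) (use mla_ideal_carrier in auto)

lemma Mcomm_subgroup: "subgroup (Mcomm G) G"
  and star_ideal_subset_Mcomm: "star_ideal G \<subseteq> Mcomm G"
  and derived_subset_Mcomm: "derived G (carrier G) \<subseteq> Mcomm G"
proof -
  have "star_set G \<subseteq> carrier G" by auto
  then have "star_ideal G \<lhd> G"
    using ideal_generated_ideal unfolding star_ideal_def mla_ideal_def by blast
  then interpret second_isomorphism_grp "star_ideal G" G "derived G (carrier G)"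
    unfolding second_isomorphism_grp_def second_isomorphism_grp_axioms_def
    by (simp add: derived_is_subgroup)
  show "subgroup (Mcomm G) G" "star_ideal G \<subseteq> Mcomm G" "derived G (carrier G) \<subseteq> Mcomm G"
    unfolding Mcomm_def
    by (fact normal_set_mult_subgroup H_contained_in_set_mult S_contained_in_set_mult)+
qed

lemma star_in_Mcomm:
  assumes "a \<in> carrier G" "b \<in> carrier G" shows "star G a b \<in> Mcomm G"
proof -
  have "star G a b \<in> star_set G" using assms by blast
  then have "star G a b \<in> star_ideal G"
    unfolding star_ideal_def by (rule subsetD[OF ideal_generated_incl])
  then show ?thesis by (rule subsetD[OF star_ideal_subset_Mcomm])
qed

lemma gcomm_in_Mcomm:
  assumes "a \<in> carrier G" "b \<in> carrier G" shows "gcomm G a b \<in> Mcomm G"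
proof -
  have "gcomm G a b \<in> derived_set G (carrier G)" using assms unfolding gcomm_def by blast
  then have "gcomm G a b \<in> derived G (carrier G)" unfolding derived_def by (rule generate.incl)
  then show ?thesis by (rule subsetD[OF derived_subset_Mcomm])
qed

end

locale mla_morphism = G1: mult_lie_alg G1 + G2: mult_lie_alg G2
  for G1 :: "'a mla" and G2 :: "'b mla" +
  fixes \<mu> :: "'a \<Rightarrow> 'b"
  assumes mla_hom: "\<mu> \<in> mla_hom G1 G2"
begin

sublocale group_hom G1 G2 \<mu>
  using mla_hom unfolding mla_hom_def group_hom_def group_hom_axioms_def
  by (simp add: G1.group_axioms G2.group_axioms)

lemma hom_star [simp]:
  "x \<in> carrier G1 \<Longrightarrow> y \<in> carrier G1 \<Longrightarrow> \<mu> (star G1 x y) = star G2 (\<mu> x) (\<mu> y)"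
  using mla_hom unfolding mla_hom_def by blast

lemma hom_conjg [simp]:
  "x \<in> carrier G1 \<Longrightarrow> y \<in> carrier G1 \<Longrightarrow> \<mu> (conjg G1 x y) = conjg G2 (\<mu> x) (\<mu> y)"
  unfolding conjg_def by simp

lemma hom_gcomm [simp]:
  "x \<in> carrier G1 \<Longrightarrow> y \<in> carrier G1 \<Longrightarrow> \<mu> (gcomm G1 x y) = gcomm G2 (\<mu> x) (\<mu> y)"
  unfolding gcomm_def by simp

lemma mla_ideal_vimage:
  assumes I: "mla_ideal G2 I"
  shows "mla_ideal G1 {x \<in> carrier G1. \<mu> x \<in> I}"
proof (rule G1.mla_idealI)
  have I2: "subgroup I G2" using I by (rule G2.mla_ideal_subgroup)
  show "subgroup {x \<in> carrier G1. \<mu> x \<in> I} G1"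
  proof (rule G1.subgroupI)
    show "{x \<in> carrier G1. \<mu> x \<in> I} \<noteq> {}" using subgroup.one_closed[OF I2] by force
  qed (auto intro: subgroup.m_closed[OF I2] subgroup.m_inv_closed[OF I2])
qed (auto intro: G2.mla_ideal_conjg_closed[OF I] G2.mla_ideal_star_right_closed[OF I]
      G2.mla_ideal_star_left_closed[OF I])

end

locale mla_epi_mod_center = mla_morphism +
  assumes image_mult_center: "(\<mu> ` carrier G1) <#>\<^bsub>G2\<^esub> mla_center G2 = carrier G2"
begin

lemma carrier_decomp:
  assumes "x \<in> carrier G2"
  obtains g z where "g \<in> carrier G1" "z \<in> mla_center G2" "x = \<mu> g \<otimes>\<^bsub>G2\<^esub> z"
proof -
  have "x \<in> (\<mu> ` carrier G1) <#>\<^bsub>G2\<^esub> mla_center G2" using assms by (simp add: image_mult_center)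
  then show thesis using that unfolding set_mult_def by blast
qed

lemma center_image:
  assumes z: "z \<in> mla_center G1" shows "\<mu> z \<in> mla_center G2"
proof (rule G2.centerI)
  fix y assume "y \<in> carrier G2"
  then obtain g w where g: "g \<in> carrier G1" and w: "w \<in> mla_center G2"
    and y: "y = \<mu> g \<otimes>\<^bsub>G2\<^esub> w"
    by (rule carrier_decomp)
  have zc: "\<mu> z \<in> carrier G2" and wc: "w \<in> carrier G2" using z w by simp_all
  have "\<mu> z \<otimes>\<^bsub>G2\<^esub> \<mu> g = \<mu> (z \<otimes>\<^bsub>G1\<^esub> g)" using z g by simp
  also have "\<dots> = \<mu> g \<otimes>\<^bsub>G2\<^esub> \<mu> z" using z g by (simp add: G1.center_commute)
  finally have zg: "\<mu> z \<otimes>\<^bsub>G2\<^esub> \<mu> g = \<mu> g \<otimes>\<^bsub>G2\<^esub> \<mu> z" .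
  have "\<mu> z \<otimes>\<^bsub>G2\<^esub> y = (\<mu> z \<otimes>\<^bsub>G2\<^esub> \<mu> g) \<otimes>\<^bsub>G2\<^esub> w"
    using g zc wc by (simp add: y G2.m_assoc)
  also have "\<dots> = \<mu> g \<otimes>\<^bsub>G2\<^esub> (w \<otimes>\<^bsub>G2\<^esub> \<mu> z)"
    using g zc wc by (simp add: zg G2.m_assoc G2.center_commute[OF w zc])
  also have "\<dots> = y \<otimes>\<^bsub>G2\<^esub> \<mu> z"
    using g zc wc by (simp add: y G2.m_assoc)
  finally show "\<mu> z \<otimes>\<^bsub>G2\<^esub> y = y \<otimes>\<^bsub>G2\<^esub> \<mu> z" .
  have "star G2 (\<mu> z) y = \<mu> (star G1 z g)" using z g w by (simp add: y del: G1.star_center_left)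
  then show "star G2 (\<mu> z) y = \<one>\<^bsub>G2\<^esub>" using z g by simp
qed (use z in simp)

lemma mla_ideal_image:
  assumes I: "mla_ideal G1 I" shows "mla_ideal G2 (\<mu> ` I)"
proof (rule G2.mla_idealI)
  have I1: "subgroup I G1" using I by (rule G1.mla_ideal_subgroup)
  then show "subgroup (\<mu> ` I) G2" by (rule subgroup_img_is_subgroup)
  fix x t assume x: "x \<in> carrier G2" and "t \<in> \<mu> ` I"
  from \<open>t \<in> \<mu> ` I\<close> obtain s where t: "t = \<mu> s" and s: "s \<in> I" by (rule imageE)
  obtain g w where g: "g \<in> carrier G1" and w: "w \<in> mla_center G2" and xgw: "x = \<mu> g \<otimes>\<^bsub>G2\<^esub> w"
    using x by (rule carrier_decomp)
  have sc: "s \<in> carrier G1" using I1 s by (rule subgroup.mem_carrier)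
  have "conjg G2 x t = \<mu> (conjg G1 g s)" using g w sc by (simp add: xgw t)
  then show "conjg G2 x t \<in> \<mu> ` I" using G1.mla_ideal_conjg_closed[OF I g s] by blast
  have "star G2 x t = \<mu> (star G1 g s)" using g w sc by (simp add: xgw t)
  then show "star G2 x t \<in> \<mu> ` I" using G1.mla_ideal_star_right_closed[OF I g s] by blast
  have "star G2 t x = \<mu> (star G1 s g)" using g w sc by (simp add: xgw t)
  then show "star G2 t x \<in> \<mu> ` I" using G1.mla_ideal_star_left_closed[OF I g s] by blast
qed

lemma ideal_generated_image:
  assumes S: "S \<subseteq> carrier G1"
  shows "\<mu> ` ideal_generated G1 S = ideal_generated G2 (\<mu> ` S)"
proof
  have "\<mu> ` S \<subseteq> carrier G2" using S by auto
  then have "mla_ideal G1 {x \<in> carrier G1. \<mu> x \<in> ideal_generated G2 (\<mu> ` S)}"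
    by (intro mla_ideal_vimage G2.ideal_generated_ideal)
  moreover have "S \<subseteq> {x \<in> carrier G1. \<mu> x \<in> ideal_generated G2 (\<mu> ` S)}"
    using S ideal_generated_incl[of "\<mu> ` S" G2] by auto
  ultimately have "ideal_generated G1 S \<subseteq> {x \<in> carrier G1. \<mu> x \<in> ideal_generated G2 (\<mu> ` S)}"
    by (rule ideal_generated_least)
  then show "\<mu> ` ideal_generated G1 S \<subseteq> ideal_generated G2 (\<mu> ` S)" by blast
next
  have "mla_ideal G2 (\<mu> ` ideal_generated G1 S)"
    using S by (intro mla_ideal_image G1.ideal_generated_ideal)
  moreover have "\<mu> ` S \<subseteq> \<mu> ` ideal_generated G1 S"
    using ideal_generated_incl by (rule image_mono)
  ultimately show "ideal_generated G2 (\<mu> ` S) \<subseteq> \<mu> ` ideal_generated G1 S"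
    by (rule ideal_generated_least)
qed

lemma star_set_image: "\<mu> ` star_set G1 = star_set G2"
proof
  show "\<mu> ` star_set G1 \<subseteq> star_set G2" by force
  show "star_set G2 \<subseteq> \<mu> ` star_set G1"
  proof
    fix t assume "t \<in> star_set G2"
    then obtain a b where a: "a \<in> carrier G2" and b: "b \<in> carrier G2" and t: "t = star G2 a b"
      by blast
    obtain g z where "g \<in> carrier G1" "z \<in> mla_center G2" "a = \<mu> g \<otimes>\<^bsub>G2\<^esub> z"
      using a by (rule carrier_decomp)
    moreover obtain g' z' where "g' \<in> carrier G1" "z' \<in> mla_center G2" "b = \<mu> g' \<otimes>\<^bsub>G2\<^esub> z'"
      using b by (rule carrier_decomp)
    ultimately have "t = \<mu> (star G1 g g')" by (simp add: t)
    then show "t \<in> \<mu> ` star_set G1" using \<open>g \<in> carrier G1\<close> \<open>g' \<in> carrier G1\<close> by blast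
  qed
qed

lemma derived_set_image: "derived_set G2 (\<mu> ` carrier G1) = derived_set G2 (carrier G2)"
proof
  show "derived_set G2 (\<mu> ` carrier G1) \<subseteq> derived_set G2 (carrier G2)"
    by (intro UN_mono) auto
  show "derived_set G2 (carrier G2) \<subseteq> derived_set G2 (\<mu> ` carrier G1)"
  proof
    fix t assume "t \<in> derived_set G2 (carrier G2)"
    then obtain a b where a: "a \<in> carrier G2" and b: "b \<in> carrier G2" and t: "t = gcomm G2 a b"
      unfolding gcomm_def by blast
    obtain g z where "g \<in> carrier G1" "z \<in> mla_center G2" "a = \<mu> g \<otimes>\<^bsub>G2\<^esub> z"
      using a by (rule carrier_decomp)
    moreover obtain g' z' where "g' \<in> carrier G1" "z' \<in> mla_center G2" "b = \<mu> g' \<otimes>\<^bsub>G2\<^esub> z'"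
      using b by (rule carrier_decomp)
    ultimately have "t = gcomm G2 (\<mu> g) (\<mu> g')" by (simp add: t)
    then show "t \<in> derived_set G2 (\<mu> ` carrier G1)"
      using \<open>g \<in> carrier G1\<close> \<open>g' \<in> carrier G1\<close> unfolding gcomm_def by blast
  qed
qed

lemma Mcomm_image: "\<mu> ` Mcomm G1 = Mcomm G2"
proof -
  have "star_set G1 \<subseteq> carrier G1" by auto
  then have "\<mu> ` star_ideal G1 = star_ideal G2"
    unfolding star_ideal_def by (simp add: ideal_generated_image star_set_image)
  moreover have "\<mu> ` derived G1 (carrier G1) = derived G2 (carrier G2)"
    using derived_img[of "carrier G1"] derived_set_image by (simp add: derived_def)
  moreover have "star_ideal G1 \<subseteq> carrier G1"
    using G1.Mcomm_subgroup G1.star_ideal_subset_Mcomm subgroup.subset by blast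
  ultimately show ?thesis
    unfolding Mcomm_def using set_mult_hom[OF homh] G1.derived_in_carrier by simp
qed

definition quot_center_map :: "'a set \<Rightarrow> 'b set" where
  "quot_center_map C = (\<mu> ` C) <#>\<^bsub>G2\<^esub> mla_center G2"

lemma quot_center_map_coset:
  assumes g: "g \<in> carrier G1"
  shows "quot_center_map (mla_center G1 #>\<^bsub>G1\<^esub> g) = mla_center G2 #>\<^bsub>G2\<^esub> \<mu> g"
proof (intro equalityI subsetI)
  fix t assume "t \<in> quot_center_map (mla_center G1 #>\<^bsub>G1\<^esub> g)"
  then obtain a w where a: "a \<in> mla_center G1 #>\<^bsub>G1\<^esub> g" and w: "w \<in> mla_center G2"
    and t: "t = \<mu> a \<otimes>\<^bsub>G2\<^esub> w"
    unfolding quot_center_map_def set_mult_def by blast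
  from a obtain z where z: "z \<in> mla_center G1" and az: "a = g \<otimes>\<^bsub>G1\<^esub> z"
    using G1.center_rcos_iff[OF g] by blast
  have "t = \<mu> g \<otimes>\<^bsub>G2\<^esub> (\<mu> z \<otimes>\<^bsub>G2\<^esub> w)"
    using g z w by (simp add: t az G2.m_assoc)
  moreover have "\<mu> z \<otimes>\<^bsub>G2\<^esub> w \<in> mla_center G2"
    using G2.center_subgroup center_image[OF z] w by (rule subgroup.m_closed)
  ultimately show "t \<in> mla_center G2 #>\<^bsub>G2\<^esub> \<mu> g"
    using g by (auto simp: G2.center_rcos_iff)
next
  fix t assume "t \<in> mla_center G2 #>\<^bsub>G2\<^esub> \<mu> g"
  then obtain w where w: "w \<in> mla_center G2" and t: "t = \<mu> g \<otimes>\<^bsub>G2\<^esub> w"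
    using g by (auto simp: G2.center_rcos_iff)
  have "g \<in> mla_center G1 #>\<^bsub>G1\<^esub> g" using g G1.center_subgroup by (rule G1.rcos_self)
  then show "t \<in> quot_center_map (mla_center G1 #>\<^bsub>G1\<^esub> g)"
    unfolding quot_center_map_def set_mult_def using w t by blast
qed

lemma quot_center_map_hom:
  "quot_center_map \<in> mla_hom (quot_mla G1 (mla_center G1)) (quot_mla G2 (mla_center G2))"
proof -
  let ?Q1 = "quot_mla G1 (mla_center G1)" and ?Q2 = "quot_mla G2 (mla_center G2)"
  have "quot_center_map A \<in> carrier ?Q2 \<and>
        quot_center_map (A \<otimes>\<^bsub>?Q1\<^esub> B) = quot_center_map A \<otimes>\<^bsub>?Q2\<^esub> quot_center_map B \<and>
        quot_center_map (star ?Q1 A B) = star ?Q2 (quot_center_map A) (quot_center_map B)"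
    if A: "A \<in> carrier ?Q1" and B: "B \<in> carrier ?Q1" for A B
  proof -
    obtain g g' where g: "g \<in> carrier G1" "A = mla_center G1 #>\<^bsub>G1\<^esub> g"
      and g': "g' \<in> carrier G1" "B = mla_center G1 #>\<^bsub>G1\<^esub> g'"
      using A B by (auto simp: quot_mla_carrier_iff)
    then show ?thesis
      by (auto simp: quot_center_map_coset quot_mla_carrier_iff G1.center_normal G2.center_normal
          G1.quot_mla_mult G2.quot_mla_mult G1.quot_center_star G2.quot_center_star)
  qed
  then show ?thesis unfolding mla_hom_def hom_def by auto
qed

lemma quot_center_map_surj:
  "quot_center_map ` carrier (quot_mla G1 (mla_center G1)) = carrier (quot_mla G2 (mla_center G2))"
proof (intro equalityI subsetI)
  fix C assume "C \<in> quot_center_map ` carrier (quot_mla G1 (mla_center G1))"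
  then show "C \<in> carrier (quot_mla G2 (mla_center G2))"
    using quot_center_map_hom unfolding mla_hom_def hom_def by auto
next
  fix C assume "C \<in> carrier (quot_mla G2 (mla_center G2))"
  then obtain h where h: "h \<in> carrier G2" and C: "C = mla_center G2 #>\<^bsub>G2\<^esub> h"
    by (auto simp: quot_mla_carrier_iff)
  obtain g w where g: "g \<in> carrier G1" and w: "w \<in> mla_center G2" and hgw: "h = \<mu> g \<otimes>\<^bsub>G2\<^esub> w"
    using h by (rule carrier_decomp)
  have "h \<in> mla_center G2 #>\<^bsub>G2\<^esub> \<mu> g" using g w by (auto simp: hgw G2.center_rcos_iff)
  then have "C = quot_center_map (mla_center G1 #>\<^bsub>G1\<^esub> g)"
    using G2.repr_independence[OF _ _ G2.center_subgroup] g by (simp add: C quot_center_map_coset)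
  moreover have "mla_center G1 #>\<^bsub>G1\<^esub> g \<in> carrier (quot_mla G1 (mla_center G1))"
    using g by (auto simp: quot_mla_carrier_iff)
  ultimately show "C \<in> quot_center_map ` carrier (quot_mla G1 (mla_center G1))" by (rule image_eqI)
qed

lemma quot_center_map_rep:
  assumes g: "g \<in> carrier G1" and h: "h \<in> carrier G2"
    and "quot_center_map (mla_center G1 #>\<^bsub>G1\<^esub> g) = mla_center G2 #>\<^bsub>G2\<^esub> h"
  obtains w where "w \<in> mla_center G2" "h = \<mu> g \<otimes>\<^bsub>G2\<^esub> w"
proof -
  have "h \<in> mla_center G2 #>\<^bsub>G2\<^esub> \<mu> g"
    using G2.repr_independenceD[OF G2.center_subgroup h] assms by (simp add: quot_center_map_coset)
  then show thesis using that g by (auto simp: G2.center_rcos_iff)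
qed

end

locale mla_isoclinic_hom = mla_epi_mod_center +
  assumes kernel_Mcomm: "kernel G1 G2 \<mu> \<inter> Mcomm G1 = {\<one>\<^bsub>G1\<^esub>}"
begin

lemma inj_on_Mcomm: "inj_on \<mu> (Mcomm G1)"
proof -
  have "kernel (G1\<lparr>carrier := Mcomm G1\<rparr>) G2 \<mu> = kernel G1 G2 \<mu> \<inter> Mcomm G1"
    using subgroup.subset[OF G1.Mcomm_subgroup] unfolding kernel_def by auto
  then show ?thesis
    using inj_on_subgroup_iff_trivial_ker[OF G1.Mcomm_subgroup] kernel_Mcomm by simp
qed

lemma center_vimage:
  assumes x: "x \<in> carrier G1" and "\<mu> x \<in> mla_center G2"
  shows "x \<in> mla_center G1"
proof (rule G1.centerI)
  have one: "\<one>\<^bsub>G1\<^esub> \<in> Mcomm G1" using G1.Mcomm_subgroup by (rule subgroup.one_closed)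
  fix y assume y: "y \<in> carrier G1"
  have "\<mu> (gcomm G1 x y) = \<mu> \<one>\<^bsub>G1\<^esub>" using assms y by simp
  then have "gcomm G1 x y = \<one>\<^bsub>G1\<^esub>"
    by (rule inj_onD[OF inj_on_Mcomm _ G1.gcomm_in_Mcomm[OF x y] one])
  with x y show "x \<otimes>\<^bsub>G1\<^esub> y = y \<otimes>\<^bsub>G1\<^esub> x" by (rule G1.commute_if_gcomm_eq_one)
  have "\<mu> (star G1 x y) = \<mu> \<one>\<^bsub>G1\<^esub>" using assms y by simp
  then show "star G1 x y = \<one>\<^bsub>G1\<^esub>"
    by (rule inj_onD[OF inj_on_Mcomm _ G1.star_in_Mcomm[OF x y] one])
qed (rule x)

lemma quot_center_map_inj: "inj_on quot_center_map (carrier (quot_mla G1 (mla_center G1)))"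
proof (rule inj_onI)
  fix A B
  assume "A \<in> carrier (quot_mla G1 (mla_center G1))" "B \<in> carrier (quot_mla G1 (mla_center G1))"
  then obtain g g' where g: "g \<in> carrier G1" "A = mla_center G1 #>\<^bsub>G1\<^esub> g"
    and g': "g' \<in> carrier G1" "B = mla_center G1 #>\<^bsub>G1\<^esub> g'"
    by (auto simp: quot_mla_carrier_iff)
  assume "quot_center_map A = quot_center_map B"
  then have "mla_center G2 #>\<^bsub>G2\<^esub> \<mu> g = mla_center G2 #>\<^bsub>G2\<^esub> \<mu> g'"
    using g g' by (simp add: quot_center_map_coset)
  then have "\<mu> g \<in> mla_center G2 #>\<^bsub>G2\<^esub> \<mu> g'"
    using G2.repr_independenceD[OF G2.center_subgroup, of "\<mu> g" "\<mu> g'"] g by simp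
  then have "\<mu> (g \<otimes>\<^bsub>G1\<^esub> inv\<^bsub>G1\<^esub> g') \<in> mla_center G2"
    using subgroup.rcos_module_imp[OF G2.center_subgroup G2.is_group] g g' by simp
  then have "g \<otimes>\<^bsub>G1\<^esub> inv\<^bsub>G1\<^esub> g' \<in> mla_center G1"
    using g g' by (simp add: center_vimage)
  then have "g \<in> mla_center G1 #>\<^bsub>G1\<^esub> g'"
    using subgroup.rcos_module_rev[OF G1.center_subgroup G1.is_group] g g' by simp
  then show "A = B"
    using G1.repr_independence[OF _ _ G1.center_subgroup] g g' by simp
qed

lemma quot_center_map_iso:
  "quot_center_map \<in> mla_iso (quot_mla G1 (mla_center G1)) (quot_mla G2 (mla_center G2))"
  unfolding mla_iso_def bij_betw_def
  using quot_center_map_hom quot_center_map_inj quot_center_map_surj by blast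

lemma Mcomm_restrict_iso:
  "restrict \<mu> (Mcomm G1) \<in> mla_iso (sub_mla G1 (Mcomm G1)) (sub_mla G2 (Mcomm G2))"
proof -
  let ?m = "restrict \<mu> (Mcomm G1)"
  have sub: "x \<in> carrier G1" if "x \<in> Mcomm G1" for x
    using G1.Mcomm_subgroup that by (rule subgroup.mem_carrier)
  have "?m \<in> Mcomm G1 \<rightarrow> Mcomm G2" using Mcomm_image by auto
  moreover have "?m (x \<otimes>\<^bsub>G1\<^esub> y) = ?m x \<otimes>\<^bsub>G2\<^esub> ?m y"
    and "?m (star G1 x y) = star G2 (?m x) (?m y)"
    if x: "x \<in> Mcomm G1" and y: "y \<in> Mcomm G1" for x y
    using subgroup.m_closed[OF G1.Mcomm_subgroup x y] G1.star_in_Mcomm[OF sub[OF x] sub[OF y]]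
      x y sub[OF x] sub[OF y] by simp_all
  moreover have "bij_betw ?m (Mcomm G1) (Mcomm G2)"
    using bij_betw_imageI[OF inj_on_Mcomm Mcomm_image] by simp
  ultimately show ?thesis
    unfolding mla_iso_def mla_hom_def hom_def sub_mla_def by simp
qed

lemma isoclinism: "isoclinism G1 G2 quot_center_map (restrict \<mu> (Mcomm G1))"
  unfolding isoclinism_def
proof (intro conjI quot_center_map_iso Mcomm_restrict_iso ballI impI)
  fix g g' h h'
  assume g: "g \<in> carrier G1" and g': "g' \<in> carrier G1" and "h \<in> carrier G2" "h' \<in> carrier G2"
    and "quot_center_map (mla_center G1 #>\<^bsub>G1\<^esub> g) = mla_center G2 #>\<^bsub>G2\<^esub> h \<and>
         quot_center_map (mla_center G1 #>\<^bsub>G1\<^esub> g') = mla_center G2 #>\<^bsub>G2\<^esub> h'"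
  then obtain w w' where "w \<in> mla_center G2" "h = \<mu> g \<otimes>\<^bsub>G2\<^esub> w"
    and "w' \<in> mla_center G2" "h' = \<mu> g' \<otimes>\<^bsub>G2\<^esub> w'"
    by (meson quot_center_map_rep)
  then show "restrict \<mu> (Mcomm G1) (gcomm G1 g g') = gcomm G2 h h'"
    and "restrict \<mu> (Mcomm G1) (star G1 g g') = star G2 h h'"
    using g g' by (simp_all add: G1.gcomm_in_Mcomm G1.star_in_Mcomm)
qed

end

theorem corollary4p9:
  fixes G1 :: "'a mla" and G2 :: "'b mla" and \<mu> :: "'a \<Rightarrow> 'b"
  assumes "mult_lie_algebra G1" and "mult_lie_algebra G2"
    and "\<mu> \<in> mla_hom G1 G2"
    and "kernel G1 G2 \<mu> \<inter> Mcomm G1 = {\<one>\<^bsub>G1\<^esub>}"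
    and "(\<mu> ` carrier G1) <#>\<^bsub>G2\<^esub> mla_center G2 = carrier G2"
  shows "isoclinism G1 G2
           (\<lambda>C. (\<mu> ` C) <#>\<^bsub>G2\<^esub> mla_center G2)
           (restrict \<mu> (Mcomm G1))"
proof -
  interpret mla_isoclinic_hom G1 G2 \<mu>
    using assms by unfold_locales
  show ?thesis
    using isoclinism unfolding quot_center_map_def[abs_def] .
qed

end
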